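(* Let $\Sigma,\Gamma$ be finite alphabets, $w\in\Sigma^{\mathbb{N}}$ an infinite word and $h:\Sigma^*\to\Gamma^*$ an injective morphism. If there exists a nonempty word $x$ such that $x^l$ is a factor of $h(w)$ for every $l\in\mathbb{N}$, then $\mathrm{ACE}(w) = \infty$.
   Context: $\mathrm{Fact}_n(w)$ is the set of length-$n$ factors of $w$. For a nonempty word $v$ and integer $p\ge0$, $v^{p/|v|}$ is the prefix of length $p$ of $vvv\cdots$. For a nonempty finite word $u$, $\mathrm{E}(u) = \sup\{ r \in \mathbb{Q} : u = v^r \text{ for some nonempty } v\}$. For an infinite word $w$, $\mathrm{ACE}(w) = \limsup_{n\to\infty}\sup\{\mathrm{E}(u) : u\in\mathrm{Fact}_n(w)\}$. *)

theory Defs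
  imports Complex_Main "HOL-Library.Extended_Real" "HOL-Library.Liminf_Limsup"
begin

definition Fact :: "nat \<Rightarrow> (nat \<Rightarrow> 'a) \<Rightarrow> 'a list set" where
  "Fact n w = {map (\<lambda>i. w (j + i)) [0..<n] | j. True}"

text \<open>v^(p/|v|): the prefix of length p of vvv...\<close>
definition frac_pow :: "'a list \<Rightarrow> nat \<Rightarrow> 'a list" where
  "frac_pow v p = map (\<lambda>i. v ! (i mod length v)) [0..<p]"

text \<open>E(u) = sup { r in Q : u = v^r for some nonempty v }; u = v^r means
  r = p/|v| and u = v^(p/|v|) for some natural p.\<close>
definition E :: "'a list \<Rightarrow> ereal" where
  "E u = Sup {ereal (real p / real (length v)) | v p. v \<noteq> [] \<and> u = frac_pow v p}"

definition ACE :: "(nat \<Rightarrow> 'a) \<Rightarrow> ereal" where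
  "ACE w = limsup (\<lambda>n. Sup (E ` Fact n w))"

definition morph :: "('a \<Rightarrow> 'b list) \<Rightarrow> 'a list \<Rightarrow> 'b list" where
  "morph h u = concat (map h u)"

text \<open>Image h(w) of an infinite word under a nonerasing morphism: its k-th letter
  is the k-th letter of h(w_0 ... w_k) (which has length > k when h is nonerasing).\<close>
definition morph_inf :: "('a \<Rightarrow> 'b list) \<Rightarrow> (nat \<Rightarrow> 'a) \<Rightarrow> nat \<Rightarrow> 'b" where
  "morph_inf h w k = morph h (map w [0..<Suc k]) ! k"

end

theory Submission
  imports Defs "HOL-Library.FuncSet"
begin

(* An injective morphism h is nonerasing, so the cut positions |h(w_0 ... w_(i-1))| increase
   with gaps at most L = max |h a|. An occurrence of x^l in h(w) with l = (N+1) L therefore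
   contains (N+1)|x| consecutive cut positions, and by pigeonhole a set F of N+1 of them are
   congruent modulo |x|. Between any two cut positions of F, h(w) reads a power of one fixed
   conjugate y of x. Choose a < b in F with (b - a) N <= Max F - Min F: then the images of
   u = w[a..b) and W = w[Min F..Max F) are powers of y, hence commute, so by injectivity u and
   W commute. Thus W has period |u| and exponent at least N. *)

lemma morph_append [simp]: "morph h (u @ v) = morph h u @ morph h v"
  by (simp add: morph_def)

lemma Nil_notin_range_if_inj_morph:
  assumes "inj (morph h)"
  shows "[] \<notin> range h"
proof
  assume "[] \<in> range h"
  then obtain a where "h a = []"
    by (metis rangeE)
  then have "morph h [a] = morph h []"
    by (simp add: morph_def)
  with assms show False
    by (metis injD list.distinct(1))
qed

definition cut_pos :: "('a \<Rightarrow> 'b list) \<Rightarrow> (nat \<Rightarrow> 'a) \<Rightarrow> nat \<Rightarrow> nat" where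
  "cut_pos h w i = length (morph h (map w [0..<i]))"

lemma cut_pos_Suc: "cut_pos h w (Suc i) = cut_pos h w i + length (h (w i))"
  by (simp add: cut_pos_def morph_def)

lemma cut_pos_0 [simp]: "cut_pos h w 0 = 0"
  by (simp add: cut_pos_def morph_def)

lemma strict_mono_cut_pos:
  assumes "[] \<notin> range h"
  shows "strict_mono (cut_pos h w)"
  using assms by (auto simp: strict_mono_Suc_iff cut_pos_Suc) (metis rangeI)

lemma cut_pos_add_le:
  assumes "\<And>a. length (h a) \<le> L"
  shows "cut_pos h w (s + k) \<le> cut_pos h w s + k * L"
proof (induction k)
  case (Suc k)
  then show ?case
    using assms[of "w (s + k)"] by (simp add: cut_pos_Suc)
qed simp

lemma morph_upt_split:
  assumes "i \<le> i'"
  shows "morph h (map w [0..<i']) = morph h (map w [0..<i]) @ morph h (map w [i..<i'])"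
  using assms by (metis map_append morph_append le0 upt_add_eq_append le_add_diff_inverse)

lemma morph_inf_eq_nth_morph_prefix:
  assumes "[] \<notin> range h" and "k < cut_pos h w i"
  shows "morph_inf h w k = morph h (map w [0..<i]) ! k"
proof (cases "i \<le> Suc k")
  case True
  then show ?thesis
    using assms(2) unfolding morph_inf_def morph_upt_split[OF True]
    by (simp add: nth_append cut_pos_def del: upt_Suc)
next
  case False
  then have "Suc k \<le> i"
    by simp
  moreover have "k < cut_pos h w (Suc k)"
    using seq_suble[OF strict_mono_cut_pos[OF assms(1), of w], of "Suc k"] by simp
  ultimately show ?thesis
    unfolding morph_inf_def morph_upt_split[OF \<open>Suc k \<le> i\<close>]
    by (simp add: nth_append cut_pos_def del: upt_Suc)
qed

lemma morph_upt_eq_morph_inf_factor: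
  assumes "[] \<notin> range h" and "i \<le> i'"
  shows "morph h (map w [i..<i']) =
    map (\<lambda>t. morph_inf h w (cut_pos h w i + t)) [0..<cut_pos h w i' - cut_pos h w i]"
proof (rule nth_equalityI)
  note split = morph_upt_split[OF assms(2), of h w]
  then show len: "length (morph h (map w [i..<i'])) =
      length (map (\<lambda>t. morph_inf h w (cut_pos h w i + t)) [0..<cut_pos h w i' - cut_pos h w i])"
    unfolding cut_pos_def by simp
  fix t
  assume "t < length (morph h (map w [i..<i']))"
  then have "cut_pos h w i + t < cut_pos h w i'"
    unfolding cut_pos_def split by simp
  then have "morph_inf h w (cut_pos h w i + t) = morph h (map w [0..<i']) ! (cut_pos h w i + t)"
    by (rule morph_inf_eq_nth_morph_prefix[OF assms(1)])
  also have "\<dots> = morph h (map w [i..<i']) ! t"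
    unfolding split by (simp add: cut_pos_def)
  finally show "morph h (map w [i..<i']) ! t = map (\<lambda>t. morph_inf h w (cut_pos h w i + t))
      [0..<cut_pos h w i' - cut_pos h w i] ! t"
    using \<open>cut_pos h w i + t < cut_pos h w i'\<close> by (simp add: less_diff_conv add.commute)
qed

lemma exists_cut_positions_in_window:
  assumes "[] \<notin> range h" and "\<And>a. length (h a) \<le> L"
  shows "\<exists>s. \<forall>k<K. j \<le> cut_pos h w (s + k) \<and> cut_pos h w (s + k) < j + K * L"
proof
  define s where "s = (LEAST i. j \<le> cut_pos h w i)"
  have "j \<le> cut_pos h w j"
    using seq_suble[OF strict_mono_cut_pos[OF assms(1)]] .
  then have start: "j \<le> cut_pos h w s"
    unfolding s_def by (rule LeastI)
  have start_bound: "cut_pos h w s < j + L"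
  proof (cases s)
    case 0
    have "0 < L"
      using assms(2)[of undefined] assms(1) by (metis Suc_le_eq le_trans length_greater_0_conv rangeI)
    then show ?thesis
      using 0 by simp
  next
    case (Suc s')
    then have "cut_pos h w s' < j"
      using not_less_Least[of s' "\<lambda>i. j \<le> cut_pos h w i"] unfolding s_def by simp
    then show ?thesis
      using Suc assms(2)[of "w s'"] by (simp add: cut_pos_Suc)
  qed
  show "\<forall>k<K. j \<le> cut_pos h w (s + k) \<and> cut_pos h w (s + k) < j + K * L"
  proof (intro allI impI conjI)
    fix k
    assume "k < K"
    show "j \<le> cut_pos h w (s + k)"
      using start strict_mono_less_eq[OF strict_mono_cut_pos[OF assms(1), of w], of s "s + k"]
      by simp
    have "cut_pos h w (s + k) < j + (k + 1) * L"
      using cut_pos_add_le[of h L w s k] assms(2) start_bound by simp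
    also have "\<dots> \<le> j + K * L"
      using \<open>k < K\<close> mult_le_mono1[of "k + 1" K L] by simp
    finally show "cut_pos h w (s + k) < j + K * L" .
  qed
qed

lemma nth_concat_replicate:
  assumes "i < l * length x"
  shows "concat (replicate l x) ! i = x ! (i mod length x)"
  using assms
proof (induction l arbitrary: i)
  case (Suc l)
  then show ?case
    by (cases "i < length x") (auto simp: nth_append mod_if)
qed simp

lemma factor_of_power_window:
  assumes window: "\<And>i. i < l * length x \<Longrightarrow> v (j + i) = x ! (i mod length x)"
    and "j \<le> a" and "a + m * length x \<le> j + l * length x"
  shows "map (\<lambda>t. v (a + t)) [0..<m * length x] =
    concat (replicate m (rotate ((a - j) mod length x) x))"
proof (rule nth_equalityI)
  fix t
  assume "t < length (map (\<lambda>t. v (a + t)) [0..<m * length x])"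
  then have t: "t < m * length x"
    by simp
  then have "x \<noteq> []"
    by auto
  have "v (a + t) = v (j + (a - j + t))"
    using \<open>j \<le> a\<close> by simp
  also have "\<dots> = x ! ((a - j + t) mod length x)"
    using t assms(2,3) by (intro window) linarith
  also have "\<dots> = rotate ((a - j) mod length x) x ! (t mod length x)"
    using \<open>x \<noteq> []\<close> by (simp add: nth_rotate mod_add_eq)
  also have "\<dots> = concat (replicate m (rotate ((a - j) mod length x) x)) ! t"
    using t by (simp add: nth_concat_replicate)
  finally show "map (\<lambda>t. v (a + t)) [0..<m * length x] ! t =
      concat (replicate m (rotate ((a - j) mod length x) x)) ! t"
    using t by simp
qed (simp add: length_concat sum_list_replicate)

lemma commute_imp_frac_pow:
  assumes "u @ W = W @ u" and "u \<noteq> []"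
  shows "W = frac_pow u (length W)"
proof -
  have "W ! i = u ! (i mod length u)" if "i < length W" for i
    using that
  proof (induction i rule: less_induct)
    case (less i)
    have nth_eq: "(u @ W) ! i = W ! i"
      using assms(1) less.prems by (simp add: nth_append)
    show ?case
    proof (cases "i < length u")
      case True
      then show ?thesis
        using nth_eq by (simp add: nth_append)
    next
      case False
      have "0 < length u"
        using assms(2) by simp
      then have "W ! (i - length u) = u ! ((i - length u) mod length u)"
        using False less.prems by (intro less.IH) linarith+
      then show ?thesis
        using False nth_eq by (simp add: nth_append le_mod_geq)
    qed
  qed
  then show ?thesis
    by (intro nth_equalityI) (simp_all add: frac_pow_def)
qed

lemma E_frac_pow_ge:
  assumes "v \<noteq> []"
  shows "ereal (real p / real (length v)) \<le> E (frac_pow v p)"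
  unfolding E_def using assms by (intro Sup_upper) blast

lemma card_le_if_separated:
  fixes F :: "nat set"
  assumes "finite F" and "0 < d"
    and separated: "\<And>a b. a \<in> F \<Longrightarrow> b \<in> F \<Longrightarrow> a < b \<Longrightarrow> d \<le> b - a"
  shows "card F \<le> (Max F - Min F) div d + 1"
proof (cases "F = {}")
  case False
  define f where "f i = (i - Min F) div d" for i
  have "inj_on f F"
  proof (rule linorder_inj_onI')
    fix a b
    assume "a \<in> F" "b \<in> F" "a < b"
    then have "(a - Min F) + d \<le> b - Min F"
      using separated[of a b] \<open>finite F\<close> Min_le[of F a] by linarith
    then have "(a - Min F) div d + 1 \<le> (b - Min F) div d"
      using div_le_mono[of "(a - Min F) + d" "b - Min F" d] \<open>0 < d\<close> by simp
    then show "f a \<noteq> f b"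
      unfolding f_def by simp
  qed
  moreover have "f ` F \<subseteq> {0..(Max F - Min F) div d}"
    using \<open>finite F\<close> unfolding f_def by (auto intro!: div_le_mono diff_le_mono)
  ultimately have "card F \<le> card {0..(Max F - Min F) div d}"
    using card_inj_on_le by blast
  then show ?thesis
    by simp
qed simp

lemma exists_small_gap:
  fixes F :: "nat set"
  assumes "finite F" and "0 < N" and "N < card F"
  shows "\<exists>a\<in>F. \<exists>b\<in>F. a < b \<and> (b - a) * N \<le> Max F - Min F"
proof (rule ccontr)
  assume no_small_gap: "\<not> ?thesis"
  define d where "d = (Max F - Min F) div N + 1"
  have "d \<le> b - a" if "a \<in> F" "b \<in> F" "a < b" for a b
  proof -
    have "(Max F - Min F) div N < b - a"
      using no_small_gap that div_less_iff_less_mult[OF \<open>0 < N\<close>] by (meson not_le)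
    then show ?thesis
      unfolding d_def by simp
  qed
  then have "card F \<le> (Max F - Min F) div d + 1"
    using card_le_if_separated[OF \<open>finite F\<close>] unfolding d_def by simp
  moreover have "Max F - Min F < N * d"
    using div_less_iff_less_mult[OF \<open>0 < N\<close>, of "Max F - Min F" d] unfolding d_def
    by (simp add: mult.commute)
  then have "(Max F - Min F) div d < N"
    by (simp add: div_less_iff_less_mult d_def)
  ultimately show False
    using \<open>N < card F\<close> by simp
qed

lemma exists_factor_with_exponent_if_power_images:
  assumes "inj (morph h)" and "finite F" and "0 < N" and "N < card F"
    and power_images: "\<And>a b. a \<in> F \<Longrightarrow> b \<in> F \<Longrightarrow> a \<le> b \<Longrightarrow>
      \<exists>m. morph h (map w [a..<b]) = concat (replicate m y)"
  shows "\<exists>n\<ge>N. \<exists>u\<in>Fact n w. ereal (real N) \<le> E u"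
proof -
  obtain a b where ab: "a \<in> F" "b \<in> F" "a < b" and gap: "(b - a) * N \<le> Max F - Min F"
    using exists_small_gap[OF assms(2-4)] by blast
  have "F \<noteq> {}"
    using ab by auto
  define u where "u = map w [a..<b]"
  define W where "W = map w [Min F..<Max F]"
  obtain m1 where m1: "morph h u = concat (replicate m1 y)"
    using power_images[OF ab(1,2)] ab(3) unfolding u_def by fastforce
  obtain m2 where m2: "morph h W = concat (replicate m2 y)"
    using power_images[of "Min F" "Max F"] \<open>finite F\<close> \<open>F \<noteq> {}\<close> unfolding W_def
    by (meson Max_in Min_in Min_le Max_ge order_trans)
  have "morph h (u @ W) = morph h (W @ u)"
    by (simp add: m1 m2 add.commute flip: concat_append replicate_add)
  then have "u @ W = W @ u"
    using \<open>inj (morph h)\<close> by (meson injD)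
  moreover have "u \<noteq> []"
    using ab(3) unfolding u_def by simp
  ultimately have "ereal (real (length W) / real (length u)) \<le> E W"
    using commute_imp_frac_pow E_frac_pow_ge by metis
  then have E_W: "ereal (real (Max F - Min F) / real (b - a)) \<le> E W"
    by (simp add: u_def W_def)
  have "real (b - a) * real N \<le> real (Max F - Min F)"
    using gap by (metis of_nat_le_iff of_nat_mult)
  then have "real N \<le> real (Max F - Min F) / real (b - a)"
    using ab(3) by (simp add: pos_le_divide_eq mult.commute del: of_nat_diff)
  then have "ereal (real N) \<le> E W"
    using E_W by (simp add: order.trans[OF _ E_W])
  moreover have "W = map (\<lambda>i. w (Min F + i)) [0..<Max F - Min F]"
    unfolding W_def by (rule nth_equalityI) auto
  then have "W \<in> Fact (Max F - Min F) w"
    unfolding Fact_def by blast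
  moreover have "N \<le> (b - a) * N"
    using ab(3) by (simp add: Suc_le_eq)
  then have "N \<le> Max F - Min F"
    using gap by linarith
  ultimately show ?thesis
    by blast
qed

lemma morph_upt_eq_power_if_congruent_cuts:
  assumes "[] \<notin> range h"
    and window: "\<And>i. i < l * length x \<Longrightarrow> morph_inf h w (j + i) = x ! (i mod length x)"
    and "a \<le> b" and "j \<le> cut_pos h w a" and "cut_pos h w b < j + l * length x"
    and "(cut_pos h w a - j) mod length x = r" and "(cut_pos h w b - j) mod length x = r"
  shows "\<exists>m. morph h (map w [a..<b]) = concat (replicate m (rotate r x))"
proof -
  have ordered: "cut_pos h w a \<le> cut_pos h w b"
    using strict_mono_less_eq[OF strict_mono_cut_pos[OF assms(1)]] \<open>a \<le> b\<close> by simp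
  then have "length x dvd (cut_pos h w b - j) - (cut_pos h w a - j)"
    using assms(6,7) mod_eq_dvd_iff_nat[of "cut_pos h w a - j" "cut_pos h w b - j" "length x"]
      diff_le_mono[OF ordered, of j] by simp
  then have "length x dvd cut_pos h w b - cut_pos h w a"
    using assms(4) ordered by simp
  then obtain m where len: "cut_pos h w b - cut_pos h w a = m * length x"
    by (metis dvd_def mult.commute)
  have "morph h (map w [a..<b]) =
      map (\<lambda>t. morph_inf h w (cut_pos h w a + t)) [0..<m * length x]"
    using morph_upt_eq_morph_inf_factor[OF assms(1) \<open>a \<le> b\<close>, of w] unfolding len .
  also have "\<dots> = concat (replicate m (rotate r x))"
  proof -
    have "cut_pos h w a + m * length x \<le> j + l * length x"
      using assms(5) ordered len by linarith
    then show ?thesis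
      using factor_of_power_window[of l x "morph_inf h w" j "cut_pos h w a" m] window assms(4,6)
      by simp
  qed
  finally show ?thesis ..
qed

lemma exists_cut_positions_with_power_images:
  fixes w :: "nat \<Rightarrow> 'a::finite" and h :: "'a \<Rightarrow> 'b list"
  assumes "[] \<notin> range h" and "x \<noteq> []"
    and powers: "\<forall>l. concat (replicate l x) \<in> Fact (l * length x) (morph_inf h w)"
  shows "\<exists>F y. finite F \<and> N < card F \<and> (\<forall>a\<in>F. \<forall>b\<in>F. a \<le> b \<longrightarrow>
    (\<exists>m. morph h (map w [a..<b]) = concat (replicate m y)))"
proof -
  define p where "p = length x"
  define L where "L = Max (range (\<lambda>a. length (h a)))"
  define K where "K = (N + 1) * p"
  define l where "l = (N + 1) * L"
  have L_bound: "length (h a) \<le> L" for a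
    unfolding L_def by (rule Max_ge) auto
  have "0 < p"
    using \<open>x \<noteq> []\<close> unfolding p_def by simp
  obtain j where "concat (replicate l x) = map (\<lambda>i. morph_inf h w (j + i)) [0..<l * p]"
    using powers unfolding Fact_def p_def by blast
  then have window: "morph_inf h w (j + i) = x ! (i mod p)" if "i < l * p" for i
    using that nth_concat_replicate[of i l x] arg_cong[of _ _ "\<lambda>z. z ! i"] unfolding p_def
    by fastforce
  obtain s where cuts: "\<forall>k<K. j \<le> cut_pos h w (s + k) \<and> cut_pos h w (s + k) < j + K * L"
    using exists_cut_positions_in_window[OF assms(1) L_bound] by blast
  have "K * L = l * p"
    unfolding K_def l_def by (simp only: mult_ac)
  then have cut_in_window: "j \<le> cut_pos h w i \<and> cut_pos h w i < j + l * p"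
    if "i \<in> {s..<s + K}" for i
    using cuts[rule_format, of "i - s"] that by (simp add: less_diff_conv2)
  define residue where "residue i = (cut_pos h w i - j) mod p" for i
  obtain r where "K \<le> card (residue -` {r} \<inter> {s..<s + K}) * card {..<p}"
    using pigeonhole_card[of residue "{s..<s + K}" "{..<p}"] \<open>0 < p\<close>
    unfolding residue_def by auto
  define F where "F = residue -` {r} \<inter> {s..<s + K}"
  have "N < card F"
    using \<open>K \<le> card (residue -` {r} \<inter> {s..<s + K}) * card {..<p}\<close> \<open>0 < p\<close>
    unfolding F_def K_def by (metis Suc_eq_plus1 Suc_le_eq card_lessThan mult_le_cancel2)
  moreover have "\<exists>m. morph h (map w [a..<b]) = concat (replicate m (rotate r x))"
    if "a \<in> F" "b \<in> F" "a \<le> b" for a b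
  proof (rule morph_upt_eq_power_if_congruent_cuts[OF assms(1) window[unfolded p_def] \<open>a \<le> b\<close>])
    show "j \<le> cut_pos h w a" "cut_pos h w b < j + l * length x"
      using that(1,2) cut_in_window unfolding F_def p_def by auto
    show "(cut_pos h w a - j) mod length x = r" "(cut_pos h w b - j) mod length x = r"
      using that(1,2) unfolding F_def residue_def p_def by auto
  qed
  moreover have "finite F"
    unfolding F_def by simp
  ultimately show ?thesis
    by blast
qed

lemma limsup_eq_PInfty_if_unbounded:
  fixes f :: "nat \<Rightarrow> ereal"
  assumes "\<And>N. 0 < N \<Longrightarrow> \<exists>n\<ge>N. ereal (real N) \<le> f n"
  shows "limsup f = \<infinity>"
proof -
  have "(SUP m\<in>{n..}. f m) = \<infinity>" for n
  proof -
    have "\<exists>m\<in>{n..}. z < f m" if "z < \<infinity>" for z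
    proof -
      obtain k :: nat where "z < ereal (real k)"
        using \<open>z < \<infinity>\<close> less_PInf_Ex_of_nat by auto
      moreover obtain m where "max n k + 1 \<le> m" "ereal (real (max n k + 1)) \<le> f m"
        using assms[of "max n k + 1"] by auto
      moreover have "ereal (real k) \<le> ereal (real (max n k + 1))"
        by simp
      ultimately show ?thesis
        by (meson atLeast_iff le_trans max.cobounded1 le_add1 order.strict_trans2)
    qed
    then show ?thesis
      by (simp add: top_ereal_def[symmetric])
  qed
  then show ?thesis
    by (simp add: limsup_INF_SUP)
qed

theorem lemma15:
  fixes w :: "nat \<Rightarrow> 'a::finite" and h :: "'a \<Rightarrow> 'b::finite list" and x :: "'b list"
  assumes "inj (morph h)"
    and "x \<noteq> []"
    and "\<forall>l::nat. concat (replicate l x) \<in> Fact (l * length x) (morph_inf h w)"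
  shows "ACE w = \<infinity>"
  unfolding ACE_def
proof (rule limsup_eq_PInfty_if_unbounded)
  fix N :: nat
  assume "0 < N"
  obtain F y where "finite F" "N < card F"
    and "\<forall>a\<in>F. \<forall>b\<in>F. a \<le> b \<longrightarrow> (\<exists>m. morph h (map w [a..<b]) = concat (replicate m y))"
    using exists_cut_positions_with_power_images[OF Nil_notin_range_if_inj_morph[OF assms(1)] assms(2,3)]
    by blast
  then obtain n u where "N \<le> n" "u \<in> Fact n w" "ereal (real N) \<le> E u"
    using exists_factor_with_exponent_if_power_images[OF assms(1) _ \<open>0 < N\<close>] by meson
  then show "\<exists>n\<ge>N. ereal (real N) \<le> Sup (E ` Fact n w)"
    by (meson SUP_upper2)
qed

end
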